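(* Let $p$ be an odd prime, $G$ a finite non-abelian $p$-group, and $N$ a normal subgroup of $G$ with $C_G(N)\leq N$. Let $m$ be a positive integer with $d(Z(G))<m$. If $\mathrm{H}^1(G/N,\Omega_1(Z(N)))\cong\mathrm{F}_p^m$, then $G$ has a non-inner automorphism of order $p$.
   Context: $d(X)$ is the minimal number of generators of a group $X$; $\Omega_1(X)=\langle x\in X: x^p=1\rangle$; $\mathrm{F}_p$ is the field with $p$ elements. $G/N$ acts on $Z(N)$ (and on $\Omega_1(Z(N))$) via conjugation by $G$, making $\Omega_1(Z(N))$ an $\mathrm{F}_p(G/N)$-module; $\mathrm{H}^1(G/N,M)=\mathrm{Der}(G/N,M)/\mathrm{Ider}(G/N,M)$, where a derivation satisfies $\delta(xy)=\delta(x)^y\delta(y)$ and inner derivations are $\delta_h(g)=(h^{-1})^gh$. *)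

theory Defs
  imports "HOL-Algebra.Algebra"
begin

definition centralizer :: "('a, 'b) monoid_scheme \<Rightarrow> 'a set \<Rightarrow> 'a set" where
  "centralizer G S = {g \<in> carrier G. \<forall>s\<in>S. g \<otimes>\<^bsub>G\<^esub> s = s \<otimes>\<^bsub>G\<^esub> g}"

definition center :: "('a, 'b) monoid_scheme \<Rightarrow> 'a set" where
  "center G = centralizer G (carrier G)"

abbreviation subgrp :: "('a, 'b) monoid_scheme \<Rightarrow> 'a set \<Rightarrow> ('a, 'b) monoid_scheme" where
  "subgrp G H \<equiv> G\<lparr>carrier := H\<rparr>"

definition min_gens :: "('a, 'b) monoid_scheme \<Rightarrow> nat" where
  "min_gens K = Least (\<lambda>n. \<exists>S. S \<subseteq> carrier K \<and> finite S \<and> Finite_Set.card S = n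
                              \<and> generate K S = carrier K)"

definition Omega1 :: "('a, 'b) monoid_scheme \<Rightarrow> nat \<Rightarrow> 'a set" where
  "Omega1 K p = generate K {x \<in> carrier K. x [^]\<^bsub>K\<^esub> p = \<one>\<^bsub>K\<^esub>}"

definition p_group :: "('a, 'b) monoid_scheme \<Rightarrow> nat \<Rightarrow> bool" where
  "p_group G p \<longleftrightarrow> group G \<and> finite (carrier G) \<and> (\<exists>k. order G = p ^ k)"

(* Action of G/N on a subset M of Z(N) by conjugation: m^(Ng) = g^{-1} m g,
   computed via an arbitrary representative g of the coset X *)
definition qact :: "('a, 'b) monoid_scheme \<Rightarrow> 'a \<Rightarrow> 'a set \<Rightarrow> 'a" where
  "qact G m K = (let g = (SOME g. g \<in> K) in inv\<^bsub>G\<^esub> g \<otimes>\<^bsub>G\<^esub> m \<otimes>\<^bsub>G\<^esub> g)"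

definition Der :: "('a, 'b) monoid_scheme \<Rightarrow> 'a set \<Rightarrow> 'a set \<Rightarrow> ('a set \<Rightarrow> 'a) set" where
  "Der G N M = {\<delta>. \<delta> \<in> carrier (G Mod N) \<rightarrow>\<^sub>E M \<and>
     (\<forall>x\<in>carrier (G Mod N). \<forall>y\<in>carrier (G Mod N).
        \<delta> (x \<otimes>\<^bsub>G Mod N\<^esub> y) = qact G (\<delta> x) y \<otimes>\<^bsub>G\<^esub> \<delta> y)}"

definition Ider :: "('a, 'b) monoid_scheme \<Rightarrow> 'a set \<Rightarrow> 'a set \<Rightarrow> ('a set \<Rightarrow> 'a) set" where
  "Ider G N M = {\<delta>. \<exists>h\<in>M. \<delta> = (\<lambda>x\<in>carrier (G Mod N). qact G (inv\<^bsub>G\<^esub> h) x \<otimes>\<^bsub>G\<^esub> h)}"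

definition DerGroup :: "('a, 'b) monoid_scheme \<Rightarrow> 'a set \<Rightarrow> 'a set \<Rightarrow> ('a set \<Rightarrow> 'a) monoid" where
  "DerGroup G N M = \<lparr> carrier = Der G N M,
     monoid.mult = (\<lambda>\<delta> \<epsilon>. \<lambda>x\<in>carrier (G Mod N). \<delta> x \<otimes>\<^bsub>G\<^esub> \<epsilon> x),
     monoid.one = (\<lambda>x\<in>carrier (G Mod N). \<one>\<^bsub>G\<^esub>) \<rparr>"

definition H1 :: "('a, 'b) monoid_scheme \<Rightarrow> 'a set \<Rightarrow> 'a set \<Rightarrow> ('a set \<Rightarrow> 'a) set monoid" where
  "H1 G N M = DerGroup G N M Mod Ider G N M"

definition Fp_pow :: "nat \<Rightarrow> nat \<Rightarrow> (nat \<Rightarrow> nat) monoid" where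
  "Fp_pow p m = \<lparr> carrier = {..<m} \<rightarrow>\<^sub>E {..<p},
     monoid.mult = (\<lambda>f g. \<lambda>i\<in>{..<m}. (f i + g i) mod p),
     monoid.one = (\<lambda>i\<in>{..<m}. 0) \<rparr>"

definition inner_auto :: "('a, 'b) monoid_scheme \<Rightarrow> ('a \<Rightarrow> 'a) set" where
  "inner_auto G = {\<phi>. \<exists>g\<in>carrier G. \<phi> = (\<lambda>x\<in>carrier G. g \<otimes>\<^bsub>G\<^esub> x \<otimes>\<^bsub>G\<^esub> inv\<^bsub>G\<^esub> g)}"

end

theory Submission
  imports Defs
begin

(* For a derivation \<delta> : G/N \<rightarrow> M = \<Omega>\<^sub>1(Z(N)), the map g \<mapsto> g \<delta>(Ng) is an automorphism
   of G whose p-th power is the identity, so it has order p unless it is trivial.  Suppose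
   none of these automorphisms is non-inner.  An inner automorphism fixing N pointwise is
   conjugation by an element of C\<^sub>G(N) = Z(N), so every derivation has the form
   Ng \<mapsto> [g, a] with a in A = {a \<in> Z(N). [G, a] \<subseteq> M}.  On A, the map sending a to this
   derivation is a homomorphism with kernel Z(G), and a \<mapsto> a\<^sup>p maps A into Z(G) with
   kernel M; hence |Der| \<le> |A| / |Z(G)| \<le> |M| = |Ider| |M \<inter> Z(G)|.  Thus
   p\<^sup>m = |H\<^sup>1| \<le> |\<Omega>\<^sub>1(Z(G))| \<le> p\<^bsup>d(Z(G))\<^esup>, contradicting d(Z(G)) < m. *)

lemma (in group_hom) card_image_mult_card_kernel:
  assumes "finite (carrier G)"
  shows "card (h ` carrier G) * card (kernel G H h) = order G"
proof -
  let ?I = "H\<lparr>carrier := h ` carrier G\<rparr>"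
  have "group_hom G ?I h"
    using H.subgroup_imp_group[OF img_is_subgroup] hom_mult
    by (auto intro!: group_hom.intro simp: group_hom_axioms_def hom_def G.group_axioms)
  then have "G Mod kernel G ?I h \<cong> ?I"
    by (rule group_hom.FactGroup_iso) simp
  moreover have "kernel G ?I h = kernel G H h"
    by (simp add: kernel_def)
  ultimately have "card (rcosets\<^bsub>G\<^esub> kernel G H h) = card (h ` carrier G)"
    using iso_same_card by (fastforce simp: FactGroup_def)
  then show ?thesis
    using G.lagrange[OF subgroup_kernel] by simp
qed

lemma (in group) mult_inv_cancel_left [simp]:
  "x \<in> carrier G \<Longrightarrow> y \<in> carrier G \<Longrightarrow> x \<otimes> (inv x \<otimes> y) = y"
  by (simp add: m_assoc[symmetric])

lemma (in group) inv_mult_cancel_left [simp]: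
  "x \<in> carrier G \<Longrightarrow> y \<in> carrier G \<Longrightarrow> inv x \<otimes> (x \<otimes> y) = y"
  by (simp add: m_assoc[symmetric])

lemma (in group) inv_commute:
  assumes "x \<otimes> y = y \<otimes> x" "x \<in> carrier G" "y \<in> carrier G"
  shows "inv x \<otimes> y = y \<otimes> inv x"
proof -
  have "inv x \<otimes> (x \<otimes> y) \<otimes> inv x = inv x \<otimes> (y \<otimes> x) \<otimes> inv x"
    using assms(1) by simp
  then show ?thesis
    using assms(2,3) by (simp add: m_assoc)
qed

lemma centralizer_subgrp:
  "H \<subseteq> carrier G \<Longrightarrow> centralizer (G\<lparr>carrier := H\<rparr>) S = H \<inter> centralizer G S"
  by (auto simp: centralizer_def)

lemma (in group) subgroup_centralizer:
  assumes "S \<subseteq> carrier G"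
  shows "subgroup (centralizer G S) G"
proof (rule subgroupI)
  fix a b assume "a \<in> centralizer G S" "b \<in> centralizer G S"
  then show "a \<otimes> b \<in> centralizer G S"
    using assms by (auto simp: centralizer_def) (metis m_assoc subsetD)
next
  fix a assume "a \<in> centralizer G S"
  then show "inv a \<in> centralizer G S"
    using assms inv_commute by (auto simp: centralizer_def subset_iff)
next
  have "\<one> \<in> centralizer G S"
    using assms by (auto simp: centralizer_def)
  then show "centralizer G S \<noteq> {}" by blast
qed (simp add: centralizer_def)

lemma (in normal) normal_centralizer: "centralizer G H \<lhd> G"
proof -
  have "x \<otimes> c \<otimes> inv x \<in> centralizer G H" if "x \<in> carrier G" "c \<in> centralizer G H" for x c
  proof -
    have c: "c \<in> carrier G" "\<And>h. h \<in> H \<Longrightarrow> c \<otimes> h = h \<otimes> c"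
      using that(2) by (auto simp: centralizer_def)
    have "x \<otimes> c \<otimes> inv x \<otimes> h = h \<otimes> (x \<otimes> c \<otimes> inv x)" if h: "h \<in> H" for h
    proof -
      have "inv x \<otimes> h \<otimes> x \<in> H" using inv_op_closed1 \<open>x \<in> carrier G\<close> h by simp
      then have "c \<otimes> (inv x \<otimes> h \<otimes> x) = (inv x \<otimes> h \<otimes> x) \<otimes> c" using c by simp
      then have "x \<otimes> (c \<otimes> (inv x \<otimes> h \<otimes> x)) \<otimes> inv x = x \<otimes> ((inv x \<otimes> h \<otimes> x) \<otimes> c) \<otimes> inv x"
        by simp
      then show ?thesis
        using \<open>x \<in> carrier G\<close> c(1) h subset by (simp add: m_assoc subsetD)
    qed
    then show ?thesis using that c by (simp add: centralizer_def)
  qed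
  then show ?thesis
    using subgroup_centralizer[OF subset] by (simp add: normal_inv_iff)
qed

lemma (in group) center_commute:
  "x \<in> center G \<Longrightarrow> y \<in> carrier G \<Longrightarrow> x \<otimes> y = y \<otimes> x"
  unfolding center_def centralizer_def by blast

lemma (in group) subgroup_center: "subgroup (center G) G"
  unfolding center_def by (rule subgroup_centralizer) simp

lemma (in group) comm_group_center: "comm_group (G\<lparr>carrier := center G\<rparr>)"
proof -
  note subgroup_center
  then interpret Z: group "G\<lparr>carrier := center G\<rparr>"
    by (rule subgroup_imp_group)
  show ?thesis
    by (rule Z.group_comm_groupI) (simp add: center_commute subgroup.mem_carrier[OF \<open>subgroup (center G) G\<close>])
qed

lemma (in comm_group) nat_pow_hom: "(\<lambda>x. x [^] (n::nat)) \<in> hom G G"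
  by (simp add: hom_def pow_mult_distrib m_comm)

lemma (in comm_group) subgroup_roots_of_unity: "subgroup {x \<in> carrier G. x [^] (n::nat) = \<one>} G"
  using group_hom.subgroup_kernel[of G G "\<lambda>x. x [^] n"] nat_pow_hom
  by (simp add: group_hom_def group_hom_axioms_def kernel_def is_group)

lemma (in group) generate_subgroup_eq: "subgroup H G \<Longrightarrow> generate G H = H"
  by (rule generateI[symmetric]) simp_all

lemma (in comm_group) Omega1_eq: "Omega1 G p = {x \<in> carrier G. x [^] p = \<one>}"
  unfolding Omega1_def by (rule generate_subgroup_eq[OF subgroup_roots_of_unity])

lemma (in group) subgroup_nat_pow_closed:
  "subgroup H G \<Longrightarrow> h \<in> H \<Longrightarrow> h [^] (n::nat) \<in> H"
  using subgroup_int_pow_closed[of H h "int n"] by (simp add: int_pow_int)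

lemma (in comm_group) generate_insert_subset:
  assumes A: "A \<subseteq> carrier G" and s: "s \<in> carrier G" and sp: "s [^] p \<in> generate G A"
    and p: "0 < (p::nat)"
  shows "generate G (insert s A) \<subseteq> {h \<otimes> s [^] (i::nat) | h i. h \<in> generate G A}"
    (is "_ \<subseteq> ?U")
proof
  let ?H = "generate G A"
  have H: "subgroup ?H G"
    using A by (rule generate_is_subgroup)
  have Hc: "?H \<subseteq> carrier G"
    using subgroup.subset[OF H] .
  have UI: "x \<in> ?U" if "h \<in> ?H" "x = h \<otimes> s [^] (i::nat)" for x h i
    using that by blast
  fix x assume "x \<in> generate G (insert s A)"
  then show "x \<in> ?U"
  proof induction
    case one
    show ?case
      by (rule UI[OF subgroup.one_closed[OF H], of _ 0]) simp
  next
    case (incl h)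
    then consider "h = s" | "h \<in> A" by blast
    then show ?case
    proof cases
      case 1
      then show ?thesis
        by (intro UI[OF subgroup.one_closed[OF H], of _ 1]) (simp add: s)
    next
      case 2
      then have "h \<in> ?H" by (rule generate.incl)
      then show ?thesis
        by (rule UI[of _ _ 0]) (use \<open>h \<in> ?H\<close> Hc in auto)
    qed
  next
    case (inv h)
    then consider "h = s" | "h \<in> A" by blast
    then show ?case
    proof cases
      case 1
      have "s [^] (p - 1) \<otimes> s = s [^] p"
        using s p nat_pow_Suc[of s "p - 1"] by simp
      then have "(inv (s [^] p) \<otimes> s [^] (p - 1)) \<otimes> s = \<one>"
        using s by (simp add: m_assoc)
      then have "inv s = inv (s [^] p) \<otimes> s [^] (p - 1)"
        by (rule inv_equality) (use s in simp_all)
      then show ?thesis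
        using 1 by (intro UI[OF subgroup.m_inv_closed[OF H sp]]) simp
    next
      case 2
      then have "inv h \<in> ?H" by (rule generate.inv)
      then show ?thesis
        by (rule UI[of _ _ 0]) (use \<open>inv h \<in> ?H\<close> Hc in auto)
    qed
  next
    case (eng x y)
    then obtain h h' and i j :: nat
      where hh': "h \<in> ?H" "x = h \<otimes> s [^] i" "h' \<in> ?H" "y = h' \<otimes> s [^] j"
      by blast
    have "h \<in> carrier G" "h' \<in> carrier G"
      using hh' Hc by auto
    then have "x \<otimes> y = (h \<otimes> h') \<otimes> s [^] (i + j)"
      using hh' s by (simp add: m_ac nat_pow_mult[symmetric])
    then show ?case
      by (rule UI[OF subgroup.m_closed[OF H hh'(1,3)]])
  qed
qed

lemma (in comm_group) card_generate_insert_le: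
  assumes fin: "finite (carrier G)" and A: "A \<subseteq> carrier G" and s: "s \<in> carrier G"
    and sp: "s [^] p \<in> generate G A" and p: "0 < (p::nat)"
  shows "card (generate G (insert s A)) \<le> card (generate G A) * p"
proof -
  let ?H = "generate G A"
  let ?f = "\<lambda>(h, i). h \<otimes> s [^] (i::nat)"
  have H: "subgroup ?H G"
    using A by (rule generate_is_subgroup)
  have finH: "finite ?H"
    using fin subgroup.subset[OF H] by (rule finite_subset[rotated])
  have "h \<otimes> s [^] i \<in> ?f ` (?H \<times> {..<p})" if h: "h \<in> ?H" for h and i :: nat
  proof -
    have "s [^] i = (s [^] p) [^] (i div p) \<otimes> s [^] (i mod p)"
      using s by (simp add: nat_pow_pow nat_pow_mult)
    moreover have "h \<in> carrier G"
      using h subgroup.subset[OF H] by blast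
    ultimately have "h \<otimes> s [^] i = (h \<otimes> (s [^] p) [^] (i div p)) \<otimes> s [^] (i mod p)"
      using s by (simp add: m_assoc)
    moreover have "h \<otimes> (s [^] p) [^] (i div p) \<in> ?H"
      using H h sp by (simp add: subgroup.m_closed subgroup_nat_pow_closed)
    ultimately show ?thesis
      using p by (auto intro!: image_eqI[of _ _ "(h \<otimes> (s [^] p) [^] (i div p), i mod p)"])
  qed
  then have "generate G (insert s A) \<subseteq> ?f ` (?H \<times> {..<p})"
    using generate_insert_subset[OF A s sp p] by blast
  then have "card (generate G (insert s A)) \<le> card (?f ` (?H \<times> {..<p}))"
    using finH by (intro card_mono) auto
  also have "\<dots> \<le> card (?H \<times> {..<p})"
    by (rule card_image_le) (simp add: finH)
  finally show ?thesis
    by (simp add: card_cartesian_product)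
qed

lemma (in comm_group) card_generate_union_le:
  assumes fin: "finite (carrier G)" and Q: "subgroup Q G"
    and pow: "\<And>x. x \<in> carrier G \<Longrightarrow> x [^] p \<in> Q" and p: "0 < (p::nat)"
    and T: "finite T" "T \<subseteq> carrier G"
  shows "card (generate G (Q \<union> T)) \<le> card Q * p ^ card T"
  using T
proof (induction T rule: finite_induct)
  case empty
  then show ?case
    using generate_subgroup_eq[OF Q] by simp
next
  case (insert s T)
  have QT: "Q \<union> T \<subseteq> carrier G"
    using subgroup.subset[OF Q] insert.prems by auto
  have s: "s \<in> carrier G"
    using insert.prems by simp
  have "s [^] p \<in> generate G (Q \<union> T)"
    using pow[OF s] generate.incl[of _ "Q \<union> T" G] by blast
  then have "card (generate G (Q \<union> insert s T)) \<le> card (generate G (Q \<union> T)) * p"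
    using card_generate_insert_le[OF fin QT s _ p] by simp
  also have "\<dots> \<le> card Q * p ^ card T * p"
    using insert.IH insert.prems by simp
  also have "\<dots> = card Q * p ^ card (insert s T)"
    using insert.hyps by simp
  finally show ?case .
qed

lemma (in comm_group) card_roots_of_unity_le:
  assumes fin: "finite (carrier G)" and p: "0 < (p::nat)"
    and S: "S \<subseteq> carrier G" "finite S" "generate G S = carrier G"
  shows "card {x \<in> carrier G. x [^] p = \<one>} \<le> p ^ card S"
proof -
  let ?Q = "(\<lambda>x. x [^] p) ` carrier G"
  interpret pow: group_hom G G "\<lambda>x. x [^] p"
    by (simp add: group_hom_def group_hom_axioms_def is_group nat_pow_hom)
  have QS: "?Q \<union> S \<subseteq> carrier G"
    using S(1) by auto
  have "card ?Q * card {x \<in> carrier G. x [^] p = \<one>} = order G"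
    using pow.card_image_mult_card_kernel[OF fin] by (simp add: kernel_def)
  also have "order G = card (generate G (?Q \<union> S))"
    using mono_generate[of S "?Q \<union> S"] generate_incl[OF QS] S(3)
    by (simp add: order_def subset_antisym)
  also have "\<dots> \<le> card ?Q * p ^ card S"
    by (rule card_generate_union_le[OF fin pow.img_is_subgroup _ p S(2,1)]) auto
  finally have "card ?Q * card {x \<in> carrier G. x [^] p = \<one>} \<le> card ?Q * p ^ card S" .
  moreover have "0 < card ?Q"
    using fin by (auto simp: card_gt_0_iff)
  ultimately show ?thesis
    by simp
qed

lemma (in comm_group) card_Omega1_le:
  assumes fin: "finite (carrier G)" and p: "0 < p"
  shows "card (Omega1 G p) \<le> p ^ min_gens G"
proof -
  let ?gens = "\<lambda>n. \<exists>S. S \<subseteq> carrier G \<and> finite S \<and> card S = n \<and> generate G S = carrier G"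
  have "?gens (card (carrier G))"
    using fin generate_subgroup_eq[OF subgroup_self] by blast
  then have "?gens (min_gens G)"
    unfolding min_gens_def by (rule LeastI)
  then obtain S where S: "S \<subseteq> carrier G" "finite S" "card S = min_gens G" "generate G S = carrier G"
    by blast
  show ?thesis
    using card_roots_of_unity_le[OF fin p S(1,2,4)] S(3) by (simp add: Omega1_eq)
qed

lemma (in group) conj_nat_pow:
  assumes "g \<in> carrier G" "x \<in> carrier G"
  shows "(inv g \<otimes> x \<otimes> g) [^] (n::nat) = inv g \<otimes> x [^] n \<otimes> g"
proof (induction n)
  case (Suc n)
  then show ?case
    using assms by (simp add: m_assoc)
qed (use assms in simp)

lemma (in group) conj_mult:
  "h \<in> carrier G \<Longrightarrow> x \<in> carrier G \<Longrightarrow> y \<in> carrier G \<Longrightarrow>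
   inv h \<otimes> (x \<otimes> y) \<otimes> h = (inv h \<otimes> x \<otimes> h) \<otimes> (inv h \<otimes> y \<otimes> h)"
  by (simp add: m_assoc)

lemma (in group) conj_inv:
  "h \<in> carrier G \<Longrightarrow> x \<in> carrier G \<Longrightarrow> inv (inv h \<otimes> x \<otimes> h) = inv h \<otimes> inv x \<otimes> h"
  by (simp add: inv_mult_group m_assoc)

definition commutator :: "('a, 'b) monoid_scheme \<Rightarrow> 'a \<Rightarrow> 'a \<Rightarrow> 'a" where
  "commutator G g a = inv\<^bsub>G\<^esub> g \<otimes>\<^bsub>G\<^esub> inv\<^bsub>G\<^esub> a \<otimes>\<^bsub>G\<^esub> g \<otimes>\<^bsub>G\<^esub> a"

lemma (in group) commutator_closed [simp]:
  "g \<in> carrier G \<Longrightarrow> a \<in> carrier G \<Longrightarrow> commutator G g a \<in> carrier G"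
  by (simp add: commutator_def)

lemma (in group) commutator_one_right [simp]: "g \<in> carrier G \<Longrightarrow> commutator G g \<one> = \<one>"
  by (simp add: commutator_def)

lemma (in group) commutator_mult_left:
  assumes "g \<in> carrier G" "h \<in> carrier G" "a \<in> carrier G"
  shows "commutator G (g \<otimes> h) a = inv h \<otimes> commutator G g a \<otimes> h \<otimes> commutator G h a"
  using assms by (simp add: commutator_def m_assoc inv_mult_group)

lemma (in group) commutator_eq_one_iff:
  assumes "g \<in> carrier G" "a \<in> carrier G"
  shows "commutator G g a = \<one> \<longleftrightarrow> a \<otimes> g = g \<otimes> a"
proof -
  have "commutator G g a = inv (a \<otimes> g) \<otimes> (g \<otimes> a)"
    using assms by (simp add: commutator_def m_assoc inv_mult_group)
  also have "\<dots> = \<one> \<longleftrightarrow> a \<otimes> g = g \<otimes> a"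
    using assms by (metis inv_closed l_inv m_closed inv_solve_left r_one)
  finally show ?thesis .
qed

locale self_centralizing_normal = normal N G for N and G (structure) +
  fixes p :: nat
  assumes finite_carrier: "finite (carrier G)"
    and centralizer_le: "centralizer G N \<subseteq> N"
    and prime_p: "Factorial_Ring.prime p"
begin

(* Because C\<^sub>G(N) \<le> N, the centralizer of N is Z(N) (center_N_eq), and M is \<Omega>\<^sub>1(Z(N))
   (Omega1_ZN). *)
abbreviation ZN where "ZN \<equiv> centralizer G N"

definition M where "M = {x \<in> ZN. x [^] p = \<one>}"

lemma ZN_subgroup: "subgroup ZN G"
  using subgroup_centralizer[OF subset] .

lemma ZN_normal: "ZN \<lhd> G"
  by (rule normal_centralizer)

lemma ZN_carrier: "x \<in> ZN \<Longrightarrow> x \<in> carrier G"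
  using subgroup.mem_carrier[OF ZN_subgroup] .

lemma ZN_commute: "x \<in> ZN \<Longrightarrow> y \<in> ZN \<Longrightarrow> x \<otimes> y = y \<otimes> x"
  using centralizer_le unfolding centralizer_def by blast

lemma ZN_swap_middle:
  "a \<in> ZN \<Longrightarrow> b \<in> ZN \<Longrightarrow> c \<in> ZN \<Longrightarrow> d \<in> ZN \<Longrightarrow>
   a \<otimes> b \<otimes> (c \<otimes> d) = a \<otimes> c \<otimes> (b \<otimes> d)"
  using ZN_commute[of b c] by (simp add: m_assoc[symmetric] ZN_carrier) (simp add: m_assoc ZN_carrier)

lemma center_N_eq: "center (G\<lparr>carrier := N\<rparr>) = ZN"
  using centralizer_le by (auto simp: center_def centralizer_subgrp[OF subset])

lemma center_subset_ZN: "center G \<subseteq> ZN"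
  using subset by (auto simp: center_def centralizer_def)

lemma comm_group_ZN: "comm_group (G\<lparr>carrier := ZN\<rparr>)"
  using group.comm_group_center[OF subgroup_imp_group[OF subgroup_axioms]] by (simp add: center_N_eq)

lemma M_eq:
  "M = {x \<in> carrier (G\<lparr>carrier := ZN\<rparr>). x [^]\<^bsub>G\<lparr>carrier := ZN\<rparr>\<^esub> p = \<one>\<^bsub>G\<lparr>carrier := ZN\<rparr>\<^esub>}"
  by (simp add: M_def nat_pow_consistent[symmetric])

lemma Omega1_ZN: "Omega1 (G\<lparr>carrier := ZN\<rparr>) p = M"
  by (simp only: comm_group.Omega1_eq[OF comm_group_ZN] M_eq)

lemma M_subgroup: "subgroup M G"
  using incl_subgroup[OF ZN_subgroup comm_group.subgroup_roots_of_unity[OF comm_group_ZN]]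
  by (simp only: M_eq)

lemma M_carrier: "x \<in> M \<Longrightarrow> x \<in> carrier G"
  using subgroup.mem_carrier[OF M_subgroup] .

lemma M_ZN: "x \<in> M \<Longrightarrow> x \<in> ZN"
  by (simp add: M_def)

lemma M_conj: "g \<in> carrier G \<Longrightarrow> x \<in> M \<Longrightarrow> inv g \<otimes> x \<otimes> g \<in> M"
  using normal.inv_op_closed1[OF ZN_normal] by (simp add: M_def conj_nat_pow ZN_carrier)

lemma rcos_in_quotient: "g \<in> carrier G \<Longrightarrow> N #> g \<in> carrier (G Mod N)"
  by (simp add: FactGroup_def rcosetsI[OF subset])

lemma quotient_cases:
  assumes "K \<in> carrier (G Mod N)"
  obtains g where "g \<in> carrier G" "K = N #> g"
  using assms by (auto simp: FactGroup_def RCOSETS_def)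

lemma rcos_mult_N: "g \<in> carrier G \<Longrightarrow> n \<in> N \<Longrightarrow> N #> (g \<otimes> n) = N #> g"
  using rcos_module_rev[OF is_group, of g "g \<otimes> n"] inv_op_closed2[of g n]
    repr_independence[OF _ _ subgroup_axioms]
  by (simp add: m_assoc)

lemma qact_rcos:
  assumes z: "z \<in> ZN" and g: "g \<in> carrier G"
  shows "qact G z (N #> g) = inv g \<otimes> z \<otimes> g"
proof -
  have "(SOME x. x \<in> N #> g) \<in> N #> g"
    using rcos_self[OF g subgroup_axioms] by (rule someI)
  then obtain n where n: "n \<in> N" and rep: "(SOME x. x \<in> N #> g) = n \<otimes> g"
    unfolding r_coset_def by blast
  have "n \<in> carrier G" "z \<in> carrier G"
    using n z subset ZN_carrier by auto
  moreover have "z \<otimes> n = n \<otimes> z"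
    using z n unfolding centralizer_def by blast
  ultimately have "z \<otimes> (n \<otimes> g) = n \<otimes> (z \<otimes> g)"
    using g by (simp add: m_assoc[symmetric])
  then show ?thesis
    using g \<open>n \<in> carrier G\<close> \<open>z \<in> carrier G\<close> by (simp add: qact_def rep inv_mult_group m_assoc)
qed

lemma Der_iff:
  "\<delta> \<in> Der G N M \<longleftrightarrow> \<delta> \<in> carrier (G Mod N) \<rightarrow>\<^sub>E M \<and>
     (\<forall>g\<in>carrier G. \<forall>h\<in>carrier G.
        \<delta> (N #> (g \<otimes> h)) = inv h \<otimes> \<delta> (N #> g) \<otimes> h \<otimes> \<delta> (N #> h))"
    (is "_ \<longleftrightarrow> ?fun \<and> ?cocycle")
proof -
  have "\<delta> ((N #> g) \<otimes>\<^bsub>G Mod N\<^esub> (N #> h)) = qact G (\<delta> (N #> g)) (N #> h) \<otimes> \<delta> (N #> h)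
    \<longleftrightarrow> \<delta> (N #> (g \<otimes> h)) = inv h \<otimes> \<delta> (N #> g) \<otimes> h \<otimes> \<delta> (N #> h)"
    if F: ?fun and g: "g \<in> carrier G" and h: "h \<in> carrier G" for g h
  proof -
    have "\<delta> (N #> g) \<in> ZN"
      using PiE_mem[OF F rcos_in_quotient[OF g]] by (rule M_ZN)
    then show ?thesis
      using g h by (simp add: rcos_sum qact_rcos)
  qed
  then show ?thesis
    unfolding Der_def by (auto elim!: quotient_cases) (metis rcos_in_quotient)+
qed

lemma Der_in_M: "\<delta> \<in> Der G N M \<Longrightarrow> g \<in> carrier G \<Longrightarrow> \<delta> (N #> g) \<in> M"
  using rcos_in_quotient by (auto simp: Der_iff)

lemma Der_cocycle:
  "\<delta> \<in> Der G N M \<Longrightarrow> g \<in> carrier G \<Longrightarrow> h \<in> carrier G \<Longrightarrow>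
   \<delta> (N #> (g \<otimes> h)) = inv h \<otimes> \<delta> (N #> g) \<otimes> h \<otimes> \<delta> (N #> h)"
  by (simp add: Der_iff)

lemma quotient_fun_eqI:
  assumes "\<delta> \<in> extensional (carrier (G Mod N))" "\<epsilon> \<in> extensional (carrier (G Mod N))"
    and "\<And>g. g \<in> carrier G \<Longrightarrow> \<delta> (N #> g) = \<epsilon> (N #> g)"
  shows "\<delta> = \<epsilon>"
  using assms by (auto intro: extensionalityI elim!: quotient_cases)

lemma Der_on_N:
  assumes d: "\<delta> \<in> Der G N M" and n: "n \<in> N"
  shows "\<delta> (N #> n) = \<one>"
proof -
  have c: "\<delta> (N #> \<one>) \<in> carrier G"
    using Der_in_M[OF d] M_carrier by simp
  have "\<delta> (N #> \<one>) = \<delta> (N #> \<one>) \<otimes> \<delta> (N #> \<one>)"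
    using Der_cocycle[OF d, of \<one> \<one>] c by simp
  then have "\<delta> (N #> \<one>) = \<one>"
    using c by (metis l_cancel_one')
  moreover have "N #> n = N #> \<one>"
    using coset_join2[OF _ subgroup_axioms] n one_closed subset by auto
  ultimately show ?thesis
    by simp
qed

abbreviation Fun_M where "Fun_M \<equiv> product_group (carrier (G Mod N)) (\<lambda>_. G\<lparr>carrier := M\<rparr>)"

lemma DerGroup_eq: "DerGroup G N M = Fun_M\<lparr>carrier := Der G N M\<rparr>"
  by (simp add: DerGroup_def product_group_def)

lemma group_Fun_M: "group Fun_M"
  using subgroup_imp_group[OF M_subgroup] by simp

lemma Der_mult_closed:
  assumes d: "\<delta> \<in> Der G N M" and e: "\<epsilon> \<in> Der G N M"
  shows "(\<lambda>K\<in>carrier (G Mod N). \<delta> K \<otimes> \<epsilon> K) \<in> Der G N M"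
  unfolding Der_iff
proof (intro conjI ballI)
  show "(\<lambda>K\<in>carrier (G Mod N). \<delta> K \<otimes> \<epsilon> K) \<in> carrier (G Mod N) \<rightarrow>\<^sub>E M"
    using d e subgroup.m_closed[OF M_subgroup] by (auto simp: Der_iff PiE_iff)
  fix g h assume g: "g \<in> carrier G" and h: "h \<in> carrier G"
  have Z: "inv h \<otimes> \<delta> (N #> g) \<otimes> h \<in> ZN" "inv h \<otimes> \<epsilon> (N #> g) \<otimes> h \<in> ZN"
    "\<delta> (N #> h) \<in> ZN" "\<epsilon> (N #> h) \<in> ZN"
    using M_ZN M_conj Der_in_M d e g h by auto
  have "\<delta> (N #> g) \<in> carrier G" "\<epsilon> (N #> g) \<in> carrier G"
    using M_carrier Der_in_M d e g by auto
  then show "(\<lambda>K\<in>carrier (G Mod N). \<delta> K \<otimes> \<epsilon> K) (N #> (g \<otimes> h)) =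
    inv h \<otimes> (\<lambda>K\<in>carrier (G Mod N). \<delta> K \<otimes> \<epsilon> K) (N #> g) \<otimes> h
      \<otimes> (\<lambda>K\<in>carrier (G Mod N). \<delta> K \<otimes> \<epsilon> K) (N #> h)"
    using g h d e ZN_swap_middle[OF Z] by (simp add: rcos_in_quotient Der_cocycle conj_mult)
qed

lemma Der_inv_closed:
  assumes d: "\<delta> \<in> Der G N M"
  shows "(\<lambda>K\<in>carrier (G Mod N). inv (\<delta> K)) \<in> Der G N M"
  unfolding Der_iff
proof (intro conjI ballI)
  show "(\<lambda>K\<in>carrier (G Mod N). inv (\<delta> K)) \<in> carrier (G Mod N) \<rightarrow>\<^sub>E M"
    using d subgroup.m_inv_closed[OF M_subgroup] by (auto simp: Der_iff PiE_iff)
  fix g h assume g: "g \<in> carrier G" and h: "h \<in> carrier G"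
  have Z: "inv h \<otimes> \<delta> (N #> g) \<otimes> h \<in> ZN" "\<delta> (N #> h) \<in> ZN" "\<delta> (N #> g) \<in> carrier G"
    using M_ZN M_conj M_carrier Der_in_M d g h by auto
  then have "inv (inv h \<otimes> \<delta> (N #> g) \<otimes> h \<otimes> \<delta> (N #> h))
      = inv (inv h \<otimes> \<delta> (N #> g) \<otimes> h) \<otimes> inv (\<delta> (N #> h))"
    using ZN_commute[OF Z(1,2)] h by (simp add: inv_mult_group ZN_carrier)
  then show "(\<lambda>K\<in>carrier (G Mod N). inv (\<delta> K)) (N #> (g \<otimes> h)) =
    inv h \<otimes> (\<lambda>K\<in>carrier (G Mod N). inv (\<delta> K)) (N #> g) \<otimes> h
      \<otimes> (\<lambda>K\<in>carrier (G Mod N). inv (\<delta> K)) (N #> h)"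
    using g h d Z(3) by (simp add: rcos_in_quotient Der_cocycle conj_inv)
qed

lemma subgroup_Der: "subgroup (Der G N M) Fun_M"
proof (rule group.subgroupI[OF group_Fun_M])
  show "Der G N M \<subseteq> carrier Fun_M"
    by (auto simp: Der_iff)
  have "(\<lambda>K\<in>carrier (G Mod N). \<one>) \<in> Der G N M"
    using subgroup.one_closed[OF M_subgroup] rcos_in_quotient by (auto simp: Der_iff)
  then show "Der G N M \<noteq> {}"
    by blast
next
  fix \<delta> \<epsilon> assume "\<delta> \<in> Der G N M" "\<epsilon> \<in> Der G N M"
  then show "\<delta> \<otimes>\<^bsub>Fun_M\<^esub> \<epsilon> \<in> Der G N M"
    using Der_mult_closed by simp
next
  fix \<delta> assume d: "\<delta> \<in> Der G N M"
  then have \<delta>: "\<delta> \<in> carrier (G Mod N) \<rightarrow>\<^sub>E M"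
    by (simp add: Der_iff)
  have "inv\<^bsub>Fun_M\<^esub> \<delta> = (\<lambda>K\<in>carrier (G Mod N). inv\<^bsub>G\<lparr>carrier := M\<rparr>\<^esub> (\<delta> K))"
    using \<delta> by (simp add: subgroup_imp_group[OF M_subgroup])
  also have "\<dots> = (\<lambda>K\<in>carrier (G Mod N). inv (\<delta> K))"
    using PiE_mem[OF \<delta>] by (intro restrict_ext) (simp add: m_inv_consistent[OF M_subgroup])
  finally show "inv\<^bsub>Fun_M\<^esub> \<delta> \<in> Der G N M"
    using Der_inv_closed[OF d] by simp
qed

lemma group_DerGroup: "group (DerGroup G N M)"
  unfolding DerGroup_eq by (rule group.subgroup_imp_group[OF group_Fun_M subgroup_Der])

definition ider :: "'a \<Rightarrow> 'a set \<Rightarrow> 'a" where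
  "ider a = (\<lambda>K\<in>carrier (G Mod N). qact G (inv a) K \<otimes> a)"

lemma Ider_eq_image: "Ider G N M = ider ` M"
  by (auto simp: Ider_def ider_def)

lemma ider_rcos: "a \<in> ZN \<Longrightarrow> g \<in> carrier G \<Longrightarrow> ider a (N #> g) = commutator G g a"
  using subgroup.m_inv_closed[OF ZN_subgroup]
  by (simp add: ider_def commutator_def rcos_in_quotient qact_rcos)

lemma commutator_mult_right:
  assumes g: "g \<in> carrier G" and a: "a \<in> ZN" and b: "b \<in> ZN"
  shows "commutator G g (a \<otimes> b) = commutator G g a \<otimes> commutator G g b"
proof -
  have c: "a \<in> carrier G" "b \<in> carrier G"
    using a b ZN_carrier by auto
  have conj: "inv g \<otimes> inv a \<otimes> g \<in> ZN" "inv g \<otimes> inv b \<otimes> g \<in> ZN"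
    using normal.inv_op_closed1[OF ZN_normal] subgroup.m_inv_closed[OF ZN_subgroup] g a b by auto
  have "inv (a \<otimes> b) = inv a \<otimes> inv b"
    using ZN_commute[OF a b] c by (simp add: inv_mult_group)
  then have "commutator G g (a \<otimes> b) = (inv g \<otimes> inv a \<otimes> g) \<otimes> (inv g \<otimes> inv b \<otimes> g) \<otimes> (a \<otimes> b)"
    using g c by (simp add: commutator_def conj_mult)
  also have "\<dots> = commutator G g a \<otimes> commutator G g b"
    using ZN_swap_middle[OF conj(1) a conj(2) b] g c by (simp add: commutator_def m_assoc)
  finally show ?thesis .
qed

definition central_mod_M :: "'a set" where
  "central_mod_M = {a \<in> ZN. \<forall>g\<in>carrier G. commutator G g a \<in> M}"

lemma M_subset_central_mod_M: "M \<subseteq> central_mod_M"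
proof
  fix a assume a: "a \<in> M"
  have "commutator G g a \<in> M" if "g \<in> carrier G" for g
    using subgroup.m_closed[OF M_subgroup M_conj[OF that subgroup.m_inv_closed[OF M_subgroup a]] a]
    by (simp add: commutator_def)
  then show "a \<in> central_mod_M"
    using a M_ZN by (simp add: central_mod_M_def)
qed

lemma center_subset_central_mod_M: "center G \<subseteq> central_mod_M"
proof
  fix z assume z: "z \<in> center G"
  then have "z \<in> carrier G"
    by (simp add: center_def centralizer_def)
  then have "commutator G g z = \<one>" if "g \<in> carrier G" for g
    using that z center_commute by (simp add: commutator_eq_one_iff)
  then show "z \<in> central_mod_M"
    using z center_subset_ZN subgroup.one_closed[OF M_subgroup] by (auto simp: central_mod_M_def)
qed

lemma subgroup_central_mod_M: "subgroup central_mod_M G"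
proof (rule subgroupI)
  show "central_mod_M \<subseteq> carrier G"
    using ZN_carrier by (auto simp: central_mod_M_def)
  show "central_mod_M \<noteq> {}"
    using M_subset_central_mod_M subgroup.one_closed[OF M_subgroup] by blast
next
  fix a b assume "a \<in> central_mod_M" "b \<in> central_mod_M"
  then show "a \<otimes> b \<in> central_mod_M"
    using subgroup.m_closed[OF ZN_subgroup] subgroup.m_closed[OF M_subgroup]
    by (simp add: central_mod_M_def commutator_mult_right)
next
  fix a assume a: "a \<in> central_mod_M"
  then have aZ: "a \<in> ZN" "inv a \<in> ZN"
    using subgroup.m_inv_closed[OF ZN_subgroup] by (auto simp: central_mod_M_def)
  have "commutator G g (inv a) \<in> M" if g: "g \<in> carrier G" for g
  proof -
    have "commutator G g a \<otimes> commutator G g (inv a) = \<one>"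
      using commutator_mult_right[OF g aZ] ZN_carrier[OF aZ(1)] g by simp
    then have "commutator G g (inv a) = inv (commutator G g a)"
      using g ZN_carrier[OF aZ(1)] ZN_carrier[OF aZ(2)]
      by (metis commutator_closed inv_equality inv_comm)
    then show ?thesis
      using a g subgroup.m_inv_closed[OF M_subgroup] by (simp add: central_mod_M_def)
  qed
  then show "inv a \<in> central_mod_M"
    using aZ by (simp add: central_mod_M_def)
qed

lemma central_mod_M_ZN: "a \<in> central_mod_M \<Longrightarrow> a \<in> ZN"
  by (simp add: central_mod_M_def)

lemma ider_extensional: "ider a \<in> extensional (carrier (G Mod N))"
  by (simp add: ider_def)

lemma ider_Der:
  assumes a: "a \<in> central_mod_M"
  shows "ider a \<in> Der G N M"
  unfolding Der_iff
proof (intro conjI ballI)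
  show "ider a \<in> carrier (G Mod N) \<rightarrow>\<^sub>E M"
  proof (rule PiE_I)
    fix K assume "K \<in> carrier (G Mod N)"
    then show "ider a K \<in> M"
      using a by (auto simp: ider_rcos central_mod_M_def elim!: quotient_cases)
  qed (simp add: ider_def)
  fix g h assume "g \<in> carrier G" "h \<in> carrier G"
  then show "ider a (N #> (g \<otimes> h)) = inv h \<otimes> ider a (N #> g) \<otimes> h \<otimes> ider a (N #> h)"
    using a ZN_carrier by (simp add: ider_rcos commutator_mult_left central_mod_M_ZN)
qed

lemma group_hom_ider:
  assumes "subgroup H G" "H \<subseteq> central_mod_M"
  shows "group_hom (G\<lparr>carrier := H\<rparr>) (DerGroup G N M) ider"
proof -
  have "ider (a \<otimes> b) = ider a \<otimes>\<^bsub>DerGroup G N M\<^esub> ider b" if "a \<in> H" "b \<in> H" for a b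
  proof -
    have "a \<in> ZN" "b \<in> ZN"
      using that assms(2) central_mod_M_ZN by auto
    then show ?thesis
      by (intro quotient_fun_eqI ider_extensional)
        (auto simp: DerGroup_def ider_rcos commutator_mult_right
          subgroup.m_closed[OF ZN_subgroup] rcos_in_quotient)
  qed
  then have "ider \<in> hom (G\<lparr>carrier := H\<rparr>) (DerGroup G N M)"
    using assms(2) ider_Der by (auto simp: hom_def DerGroup_def)
  then show ?thesis
    using subgroup_imp_group[OF assms(1)] group_DerGroup
    by (simp add: group_hom_def group_hom_axioms_def)
qed

lemma ider_eq_one_iff:
  assumes a: "a \<in> ZN"
  shows "ider a = \<one>\<^bsub>DerGroup G N M\<^esub> \<longleftrightarrow> a \<in> center G"
proof -
  have "ider a = \<one>\<^bsub>DerGroup G N M\<^esub> \<longleftrightarrow> (\<forall>g\<in>carrier G. commutator G g a = \<one>)"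
  proof
    assume "ider a = \<one>\<^bsub>DerGroup G N M\<^esub>"
    then show "\<forall>g\<in>carrier G. commutator G g a = \<one>"
      using a by (auto simp: DerGroup_def ider_rcos[symmetric] rcos_in_quotient)
  next
    assume "\<forall>g\<in>carrier G. commutator G g a = \<one>"
    then show "ider a = \<one>\<^bsub>DerGroup G N M\<^esub>"
      using a by (intro quotient_fun_eqI ider_extensional) (auto simp: DerGroup_def ider_rcos rcos_in_quotient)
  qed
  also have "\<dots> \<longleftrightarrow> a \<in> center G"
    using ZN_carrier[OF a] by (auto simp: commutator_eq_one_iff center_def centralizer_def)
  finally show ?thesis .
qed

lemma kernel_ider:
  "(\<And>a. a \<in> H \<Longrightarrow> a \<in> ZN) \<Longrightarrow>
   kernel (G\<lparr>carrier := H\<rparr>) (DerGroup G N M) ider = H \<inter> center G"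
  using ider_eq_one_iff by (auto simp: kernel_def)

lemma finite_subset_carrier: "A \<subseteq> carrier G \<Longrightarrow> finite A"
  using finite_carrier by (rule finite_subset[rotated])

lemma card_Der_mult_card_center:
  assumes "Der G N M \<subseteq> ider ` central_mod_M"
  shows "card (Der G N M) * card (center G) = card central_mod_M"
proof -
  interpret ider: group_hom "G\<lparr>carrier := central_mod_M\<rparr>" "DerGroup G N M" ider
    using group_hom_ider[OF subgroup_central_mod_M] by simp
  have "ider ` central_mod_M = Der G N M"
    using assms ider_Der by auto
  moreover have "central_mod_M \<inter> center G = center G"
    using center_subset_central_mod_M by auto
  ultimately show ?thesis
    using ider.card_image_mult_card_kernel subgroup.subset[OF subgroup_central_mod_M]
    by (simp add: kernel_ider[OF central_mod_M_ZN] order_def finite_subset_carrier)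
qed

lemma card_Ider_mult_card_center: "card (Ider G N M) * card (M \<inter> center G) = card M"
proof -
  interpret ider: group_hom "G\<lparr>carrier := M\<rparr>" "DerGroup G N M" ider
    using group_hom_ider[OF M_subgroup M_subset_central_mod_M] .
  show ?thesis
    using ider.card_image_mult_card_kernel subgroup.subset[OF M_subgroup]
    by (simp add: Ider_eq_image kernel_ider[OF M_ZN] order_def finite_subset_carrier)
qed

lemma pow_central_mod_M:
  assumes a: "a \<in> central_mod_M"
  shows "a [^] p \<in> center G"
proof -
  have aZ: "a \<in> ZN" and ac: "a \<in> carrier G"
    using a ZN_carrier by (auto simp: central_mod_M_def)
  have "g \<otimes> a [^] p = a [^] p \<otimes> g" if g: "g \<in> carrier G" for g
  proof -
    define c where "c = commutator G g a"
    have cM: "c \<in> M"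
      using a g by (simp add: central_mod_M_def c_def)
    have cc: "c \<in> carrier G"
      using M_carrier[OF cM] .
    have "inv g \<otimes> a \<otimes> g = a \<otimes> inv c"
      using g ac by (simp add: c_def commutator_def inv_mult_group m_assoc)
    then have "inv g \<otimes> a [^] p \<otimes> g = a [^] p \<otimes> inv c [^] p"
      using pow_mult_distrib[OF ZN_commute[OF aZ subgroup.m_inv_closed[OF ZN_subgroup M_ZN[OF cM]]]]
        conj_nat_pow[OF g ac] ac cc by simp
    also have "\<dots> = a [^] p"
      using cM cc ac by (simp add: M_def nat_pow_inv)
    finally show ?thesis
      using g ac by (metis inv_solve_left' m_assoc inv_closed nat_pow_closed m_closed)
  qed
  then show ?thesis
    using ac by (auto simp: center_def centralizer_def)
qed

lemma card_central_mod_M_le: "card central_mod_M \<le> card (center G) * card M"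
proof -
  have "(\<lambda>a. a [^] p) \<in> hom (G\<lparr>carrier := central_mod_M\<rparr>) G"
    using ZN_commute ZN_carrier subgroup.subset[OF subgroup_central_mod_M]
    by (auto simp: hom_def pow_mult_distrib central_mod_M_def)
  then interpret pow: group_hom "G\<lparr>carrier := central_mod_M\<rparr>" G "\<lambda>a. a [^] p"
    using subgroup_imp_group[OF subgroup_central_mod_M]
    by (simp add: group_hom_def group_hom_axioms_def is_group)
  have "kernel (G\<lparr>carrier := central_mod_M\<rparr>) G (\<lambda>a. a [^] p) = M"
    using M_subset_central_mod_M by (auto simp: kernel_def M_def central_mod_M_def)
  then have "card ((\<lambda>a. a [^] p) ` central_mod_M) * card M = card central_mod_M"
    using pow.card_image_mult_card_kernel subgroup.subset[OF subgroup_central_mod_M]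
    by (simp add: order_def finite_subset_carrier)
  moreover have "card ((\<lambda>a. a [^] p) ` central_mod_M) \<le> card (center G)"
    using pow_central_mod_M by (intro card_mono finite_subset_carrier) (auto simp: center_def centralizer_def)
  ultimately show ?thesis
    by (metis mult_le_mono1)
qed

lemma card_Der_eq:
  assumes "H1 G N M \<cong> Fp_pow p m"
  shows "card (Der G N M) = p ^ m * card (Ider G N M)"
proof -
  interpret D: group "DerGroup G N M"
    by (rule group_DerGroup)
  have "subgroup (Ider G N M) (DerGroup G N M)"
    unfolding Ider_eq_image
    by (rule group_hom.img_is_subgroup[OF group_hom_ider[OF M_subgroup M_subset_central_mod_M], simplified])
  then have "card (rcosets\<^bsub>DerGroup G N M\<^esub> Ider G N M) * card (Ider G N M) = card (Der G N M)"
    using D.lagrange by (simp add: order_def DerGroup_def)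
  moreover have "card (rcosets\<^bsub>DerGroup G N M\<^esub> Ider G N M) = p ^ m"
    using iso_same_card[OF assms] by (simp add: H1_def FactGroup_def Fp_pow_def card_PiE)
  ultimately show ?thesis
    by simp
qed

definition der_aut :: "('a set \<Rightarrow> 'a) \<Rightarrow> 'a \<Rightarrow> 'a" where
  "der_aut \<delta> = (\<lambda>g\<in>carrier G. g \<otimes> \<delta> (N #> g))"

lemma der_aut_hom: "\<delta> \<in> Der G N M \<Longrightarrow> der_aut \<delta> \<in> hom G G"
  using Der_in_M M_carrier
  by (auto simp: hom_def der_aut_def Der_cocycle m_assoc)

lemma der_aut_auto:
  assumes d: "\<delta> \<in> Der G N M"
  shows "der_aut \<delta> \<in> auto G"
proof -
  have inj: "inj_on (der_aut \<delta>) (carrier G)"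
  proof (rule inj_onI)
    fix g h assume g: "g \<in> carrier G" and h: "h \<in> carrier G" and eq: "der_aut \<delta> g = der_aut \<delta> h"
    have N: "\<delta> (N #> g) \<in> N" "\<delta> (N #> h) \<in> N"
      using Der_in_M[OF d] M_ZN centralizer_le g h by auto
    have "N #> g = N #> (g \<otimes> \<delta> (N #> g))"
      using rcos_mult_N[OF g N(1)] by simp
    also have "\<dots> = N #> (h \<otimes> \<delta> (N #> h))"
      using eq g h by (simp add: der_aut_def)
    also have "\<dots> = N #> h"
      using rcos_mult_N[OF h N(2)] .
    finally show "g = h"
      using eq g h Der_in_M[OF d] M_carrier by (simp add: der_aut_def)
  qed
  moreover have "der_aut \<delta> ` carrier G = carrier G"
    using der_aut_hom[OF d] inj by (intro endo_inj_surj finite_carrier) (auto simp: hom_def)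
  ultimately show ?thesis
    using der_aut_hom[OF d]
    by (simp add: auto_def Bij_def bij_betw_def der_aut_def)
qed

lemma der_aut_pow:
  assumes d: "\<delta> \<in> Der G N M"
  shows "der_aut \<delta> [^]\<^bsub>AutoGroup G\<^esub> (n::nat) = (\<lambda>g\<in>carrier G. g \<otimes> \<delta> (N #> g) [^] n)"
proof (induction n)
  case 0
  have "(\<lambda>g\<in>carrier G. g \<otimes> \<delta> (N #> g) [^] (0::nat)) = (\<lambda>g\<in>carrier G. g)"
    by (rule restrict_ext) simp
  then show ?case
    by (simp add: AutoGroup_def BijGroup_def)
next
  case (Suc n)
  interpret A: group "AutoGroup G"
    by (rule AutoGroup)
  have "der_aut \<delta> [^]\<^bsub>AutoGroup G\<^esub> n \<in> auto G"
    using A.nat_pow_closed der_aut_auto[OF d] by (simp add: AutoGroup_def)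
  then have "der_aut \<delta> [^]\<^bsub>AutoGroup G\<^esub> Suc n
      = compose (carrier G) (der_aut \<delta> [^]\<^bsub>AutoGroup G\<^esub> n) (der_aut \<delta>)"
    using der_aut_auto[OF d] by (simp add: AutoGroup_def BijGroup_def auto_def)
  also have "\<dots> = (\<lambda>g\<in>carrier G. g \<otimes> \<delta> (N #> g) [^] Suc n)"
    unfolding compose_def
  proof (rule restrict_ext)
    fix g assume g: "g \<in> carrier G"
    define d where "d = \<delta> (N #> g)"
    have d: "d \<in> N" "d \<in> carrier G"
      using Der_in_M[OF d g] M_ZN M_carrier centralizer_le by (auto simp: d_def)
    have "der_aut \<delta> g = g \<otimes> d"
      using g by (simp add: der_aut_def d_def)
    then have "(der_aut \<delta> [^]\<^bsub>AutoGroup G\<^esub> n) (der_aut \<delta> g) = (g \<otimes> d) \<otimes> \<delta> (N #> (g \<otimes> d)) [^] n"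
      using g d by (simp add: Suc.IH)
    also have "\<dots> = g \<otimes> d [^] Suc n"
      using g d nat_pow_comm[of d 1 n] by (simp add: rcos_mult_N d_def[symmetric] m_assoc)
    finally show "(der_aut \<delta> [^]\<^bsub>AutoGroup G\<^esub> n) (der_aut \<delta> g) = g \<otimes> \<delta> (N #> g) [^] Suc n"
      by (simp add: d_def)
  qed
  finally show ?case .
qed

lemma ord_der_aut:
  assumes d: "\<delta> \<in> Der G N M" and non_inner: "der_aut \<delta> \<notin> inner_auto G"
  shows "group.ord (AutoGroup G) (der_aut \<delta>) = p"
proof -
  interpret A: group "AutoGroup G"
    by (rule AutoGroup)
  have c: "der_aut \<delta> \<in> carrier (AutoGroup G)"
    using der_aut_auto[OF d] by (simp add: AutoGroup_def)
  have "der_aut \<delta> [^]\<^bsub>AutoGroup G\<^esub> p = (\<lambda>g\<in>carrier G. g)"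
    unfolding der_aut_pow[OF d] by (rule restrict_ext) (use Der_in_M[OF d] in \<open>simp add: M_def\<close>)
  then have "der_aut \<delta> [^]\<^bsub>AutoGroup G\<^esub> p = \<one>\<^bsub>AutoGroup G\<^esub>"
    by (simp add: AutoGroup_def BijGroup_def)
  then have "A.ord (der_aut \<delta>) dvd p"
    using A.pow_eq_id[OF c] by simp
  moreover have "(\<lambda>x\<in>carrier G. x) \<in> inner_auto G"
    unfolding inner_auto_def by (auto intro!: bexI[of _ \<one>] restrict_ext)
  then have "A.ord (der_aut \<delta>) \<noteq> 1"
    using non_inner A.ord_eq_1[OF c] by (auto simp: AutoGroup_def BijGroup_def)
  ultimately show ?thesis
    using prime_p by (auto simp: prime_nat_iff)
qed

lemma inner_der_aut:
  assumes d: "\<delta> \<in> Der G N M" and inner: "der_aut \<delta> \<in> inner_auto G"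
  shows "\<delta> \<in> ider ` central_mod_M"
proof -
  obtain c where c: "c \<in> carrier G" and conj: "der_aut \<delta> = (\<lambda>x\<in>carrier G. c \<otimes> x \<otimes> inv c)"
    using inner unfolding inner_auto_def by blast
  have val: "\<delta> (N #> g) = commutator G g (inv c)" if g: "g \<in> carrier G" for g
  proof -
    have "\<delta> (N #> g) \<in> carrier G"
      using Der_in_M[OF d g] M_carrier by blast
    then have "\<delta> (N #> g) = inv g \<otimes> (g \<otimes> \<delta> (N #> g))"
      using g by simp
    also have "\<dots> = inv g \<otimes> (c \<otimes> g \<otimes> inv c)"
      using fun_cong[OF conj, of g] g by (simp add: der_aut_def)
    also have "\<dots> = commutator G g (inv c)"
      using g c by (simp add: commutator_def m_assoc)
    finally show ?thesis .
  qed
  have "c \<in> ZN"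
    unfolding centralizer_def
  proof (intro CollectI conjI ballI c)
    fix n assume n: "n \<in> N"
    then have "n \<in> carrier G"
      using subset by blast
    moreover have "c \<otimes> n \<otimes> inv c = n"
      using fun_cong[OF conj, of n] Der_on_N[OF d n] \<open>n \<in> carrier G\<close> by (simp add: der_aut_def)
    moreover have "c \<otimes> n = (c \<otimes> n \<otimes> inv c) \<otimes> c"
      using c \<open>n \<in> carrier G\<close> by (simp add: m_assoc)
    ultimately show "c \<otimes> n = n \<otimes> c"
      by simp
  qed
  then have a: "inv c \<in> central_mod_M"
    using subgroup.m_inv_closed[OF ZN_subgroup] Der_in_M[OF d] val by (auto simp: central_mod_M_def)
  have "ider (inv c) = \<delta>"
    using d a central_mod_M_ZN
    by (intro quotient_fun_eqI ider_extensional) (auto simp: Der_iff PiE_iff ider_rcos val)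
  then show ?thesis
    using a by blast
qed

lemma card_M_inter_center_le: "card (M \<inter> center G) \<le> p ^ min_gens (G\<lparr>carrier := center G\<rparr>)"
proof -
  have Omega1_eq: "Omega1 (G\<lparr>carrier := center G\<rparr>) p = M \<inter> center G"
    using center_subset_ZN
    by (auto simp: comm_group.Omega1_eq[OF comm_group_center] M_def nat_pow_consistent[symmetric])
  have "finite (carrier (G\<lparr>carrier := center G\<rparr>))"
    using finite_subset_carrier[OF subgroup.subset[OF subgroup_center]] by simp
  from comm_group.card_Omega1_le[OF comm_group_center this prime_gt_0_nat[OF prime_p]]
  show ?thesis
    unfolding Omega1_eq .
qed

theorem non_inner_aut_of_order_p:
  assumes iso: "H1 G N M \<cong> Fp_pow p m" and small: "card (M \<inter> center G) < p ^ m"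
  shows "\<exists>\<phi>\<in>auto G. \<phi> \<notin> inner_auto G \<and> group.ord (AutoGroup G) \<phi> = p"
proof (rule ccontr)
  assume none: "\<not> ?thesis"
  have "\<delta> \<in> ider ` central_mod_M" if d: "\<delta> \<in> Der G N M" for \<delta>
  proof (rule inner_der_aut[OF d], rule ccontr)
    assume "der_aut \<delta> \<notin> inner_auto G"
    then show False
      using none der_aut_auto[OF d] ord_der_aut[OF d] by blast
  qed
  then have "Der G N M \<subseteq> ider ` central_mod_M"
    by blast
  then have "card (Der G N M) * card (center G) \<le> card (center G) * card M"
    using card_Der_mult_card_center card_central_mod_M_le by simp
  moreover have "0 < card (center G)"
    using subgroup.one_closed[OF subgroup_center] finite_subset_carrier[OF subgroup.subset[OF subgroup_center]]
    by (auto simp: card_gt_0_iff)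
  ultimately have "card (Der G N M) \<le> card (Ider G N M) * card (M \<inter> center G)"
    using card_Ider_mult_card_center by (simp add: mult.commute)
  moreover have "0 < card (Ider G N M)"
    using subgroup.one_closed[OF M_subgroup] finite_subset_carrier[OF subgroup.subset[OF M_subgroup]]
    by (auto simp: Ider_eq_image card_gt_0_iff)
  ultimately show False
    using card_Der_eq[OF iso] small by (simp add: mult.commute)
qed

end

theorem lemma2p5:
  fixes G :: "('a, 'b) monoid_scheme" and N :: "'a set" and p m :: nat
  assumes "Factorial_Ring.prime p" and "odd p"
    and "p_group G p"
    and "\<not> comm_group G"
    and "N \<lhd> G"
    and "centralizer G N \<subseteq> N"
    and "m > 0"
    and "min_gens (subgrp G (center G)) < m"
    and "H1 G N (Omega1 (subgrp G (center (subgrp G N))) p) \<cong> Fp_pow p m"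
  shows "\<exists>\<phi>\<in>auto G. \<phi> \<notin> inner_auto G \<and> group.ord (AutoGroup G) \<phi> = p"
proof -
  interpret self_centralizing_normal N G p
    using assms(1,3,5,6)
    by (intro self_centralizing_normal.intro self_centralizing_normal_axioms.intro) (auto simp: p_group_def)
  have "card (M \<inter> center G) < p ^ m"
    using card_M_inter_center_le assms(8) prime_gt_1_nat[OF assms(1)]
    by (meson le_less_trans power_strict_increasing)
  then show ?thesis
    using non_inner_aut_of_order_p assms(9) by (simp add: center_N_eq Omega1_ZN)
qed

end
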